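(* Let $\alpha,\beta\in[0,\pi)$ and let $\omega\in L^1([0,1],\mathbb{R})$ with $\omega>0$ a.e., satisfying (H1) $\omega$ is monotonic on $[0,1]$ and (H2) $\inf_{x\in[0,1]}\omega(x)>0$. For $q\in L^1([0,1],\mathbb{R})$ consider the eigenvalue problem $$-y''(x)+q(x)y(x)=\lambda\,\omega(x)\,y(x)\ \text{on }[0,1],\qquad y(0)\cos\alpha+y'(0)\sin\alpha=0,\quad y(1)\cos\beta+y'(1)\sin\beta=0,$$ with eigenvalues $\lambda_1(q)<\lambda_2(q)<\cdots$. Then for every $L^1$-norm bounded subset $\Omega\subset L^1([0,1],\mathbb{R})$ there exists $M(\Omega)>0$ such that every normalized eigenfunction $\varphi_n(\cdot;\lambda_n(q))$ associated with $\lambda_n(q)$ satisfies $$|\varphi_n(x;\lambda_n(q))|\le M(\Omega)$$ for all $n\ge 1$, all $q\in\Omega$ and all $x\in[0,1]$.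
   Context: A normalized eigenfunction associated with an eigenvalue $\lambda$ is an eigenfunction $\varphi$ with $\int_0^1\omega(x)|\varphi(x)|^2\,dx=1$. The eigenvalues of the problem are real, simple, and satisfy $\lambda_n(q)\to\infty$. *)

theory Defs
  imports "HOL-Analysis.Analysis"
begin

text \<open>Weak (Caratheodory) solutions of  -y'' + q y = lam w y  on [0,1]:
  y is differentiable on [0,1] with derivative y', and y' is the indefinite
  integral of (q - lam w) y.\<close>

definition SL_eigenpair ::
  "real \<Rightarrow> real \<Rightarrow> (real \<Rightarrow> real) \<Rightarrow> (real \<Rightarrow> real) \<Rightarrow> real \<Rightarrow> (real \<Rightarrow> real) \<Rightarrow> bool" where
  "SL_eigenpair \<alpha> \<beta> w q lam y \<longleftrightarrow>
     (\<exists>y'. (\<forall>x\<in>{0..1}. (y has_real_derivative y' x) (at x within {0..1})) \<and>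
          (\<forall>x\<in>{0..1}. ((\<lambda>t. (q t - lam * w t) * y t) has_integral (y' x - y' 0)) {0..x}) \<and>
          y 0 * cos \<alpha> + y' 0 * sin \<alpha> = 0 \<and>
          y 1 * cos \<beta> + y' 1 * sin \<beta> = 0 \<and>
          (\<exists>x\<in>{0..1}. y x \<noteq> 0))"

definition SL_normalized :: "(real \<Rightarrow> real) \<Rightarrow> (real \<Rightarrow> real) \<Rightarrow> bool" where
  "SL_normalized w y \<longleftrightarrow> integral {0..1} (\<lambda>x. w x * (y x)\<^sup>2) = 1"

end

theory Submission
  imports Defs
begin

text \<open>Let \<open>E = y'\<^sup>2 + \<lambda> w y\<^sup>2\<close> and \<open>m \<le> w \<le> W\<close>. Integrating \<open>y y''\<close> by parts gives
  \<open>\<integral> y'\<^sup>2 = [y y']\<^sub>0\<^sup>1 - \<integral> q y\<^sup>2 + \<lambda>\<close>, and the boundary conditions turn this into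
  \<open>\<integral> y'\<^sup>2 \<le> \<lambda> + D max y\<^sup>2\<close> with \<open>D = |cot \<alpha>| + |cot \<beta>| + \<integral> |q|\<close>; normalisation gives
  \<open>\<integral> y\<^sup>2 \<le> 1/m\<close>. Since \<open>y\<^sup>2\<close> varies by at most \<open>\<integral> |2 y y'| \<le> \<integral> y'\<^sup>2/(2D) + 2D \<integral> y\<^sup>2\<close>,
  this bounds \<open>max y\<^sup>2\<close> by \<open>O(1 + \<lambda>/D)\<close>, which settles bounded \<open>\<lambda>\<close>.

  For large \<open>\<lambda>\<close> the monotonicity of \<open>w\<close> enters through the second mean value theorem: up to an
  error \<open>\<rho> \<integral> |q|\<close> with \<open>\<rho> = max |2 y y'|\<close>, the energy \<open>E\<close> moves in the same direction as \<open>w\<close>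
  and \<open>E/w\<close> in the opposite one, so \<open>E\<close> is comparable at any two points up to the factor \<open>W/m\<close>.
  Estimating \<open>\<rho>\<close> by AM-GM with weight \<open>\<surd>(\<lambda>m)\<close> makes the error absorbable, so
  \<open>max y'\<^sup>2 + \<lambda> m max y\<^sup>2 \<le> 4 (W/m) E(x)\<close> for every \<open>x\<close>; integrating \<open>E\<close> over \<open>[0,1]\<close> yields
  \<open>max y\<^sup>2 \<le> 16 W/m\<^sup>2\<close>.\<close>

lemma absolutely_integrable_continuous_mult:
  fixes f g :: "real \<Rightarrow> real"
  assumes "continuous_on {a..b} f" "g absolutely_integrable_on {a..b}"
  shows "(\<lambda>x. f x * g x) absolutely_integrable_on {a..b}"
proof (rule absolutely_integrable_bounded_measurable_product_real)
  show "f \<in> borel_measurable (lebesgue_on {a..b})"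
    by (rule continuous_imp_measurable_on_sets_lebesgue[OF assms(1)]) simp
  show "bounded (f ` {a..b})"
    by (rule compact_imp_bounded[OF compact_continuous_image[OF assms(1) compact_Icc]])
qed (use assms(2) in auto)

lemma product_increment_le:
  fixes u v g h :: "real \<Rightarrow> real"
  assumes g: "(g has_integral (u t - u s)) {s..t}" and h: "(h has_integral (v t - v s)) {s..t}"
    and vg: "(\<lambda>r. v r * g r) integrable_on {s..t}" and uh: "(\<lambda>r. u r * h r) integrable_on {s..t}"
    and G: "(\<lambda>r. \<bar>g r\<bar> + \<bar>h r\<bar>) integrable_on {s..t}"
    and osc: "\<And>r. r \<in> {s..t} \<Longrightarrow> \<bar>v t - v r\<bar> \<le> e \<and> \<bar>u s - u r\<bar> \<le> e"
  shows "\<bar>u t * v t - u s * v s - integral {s..t} (\<lambda>r. v r * g r + u r * h r)\<bar>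
           \<le> e * integral {s..t} (\<lambda>r. \<bar>g r\<bar> + \<bar>h r\<bar>)"
proof -
  let ?R = "\<lambda>r. (v t - v r) * g r + (u s - u r) * h r"
  have "((\<lambda>r. (v t * g r - v r * g r) + (u s * h r - u r * h r)) has_integral
          (v t * (u t - u s) - integral {s..t} (\<lambda>r. v r * g r))
          + (u s * (v t - v s) - integral {s..t} (\<lambda>r. u r * h r))) {s..t}"
    using vg uh by (intro has_integral_add has_integral_diff has_integral_mult_right g h) auto
  moreover have "integral {s..t} (\<lambda>r. v r * g r + u r * h r)
      = integral {s..t} (\<lambda>r. v r * g r) + integral {s..t} (\<lambda>r. u r * h r)"
    using vg uh by (rule integral_add)
  ultimately have R: "(?R has_integral
      (u t * v t - u s * v s - integral {s..t} (\<lambda>r. v r * g r + u r * h r))) {s..t}"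
    by (simp add: algebra_simps)
  have "\<bar>integral {s..t} ?R\<bar> \<le> integral {s..t} (\<lambda>r. e * (\<bar>g r\<bar> + \<bar>h r\<bar>))"
  proof (rule integral_norm_bound_integral[where 'a=real, simplified])
    fix r assume "r \<in> {s..t}"
    with osc have "\<bar>(v t - v r) * g r\<bar> \<le> e * \<bar>g r\<bar>" "\<bar>(u s - u r) * h r\<bar> \<le> e * \<bar>h r\<bar>"
      by (auto simp: abs_mult intro!: mult_right_mono)
    then show "\<bar>?R r\<bar> \<le> e * (\<bar>g r\<bar> + \<bar>h r\<bar>)"
      by (simp add: distrib_left abs_triangle_ineq order_trans[OF abs_triangle_ineq add_mono])
  qed (use R G integrable_on_mult_right in auto)
  then show ?thesis
    using integral_unique[OF R] by (simp add: integral_mult_right)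
qed

lemma product_increment_le_of_short:
  fixes u v g h :: "real \<Rightarrow> real"
  assumes cu: "continuous_on {a..b} u" and cv: "continuous_on {a..b} v"
    and g: "g absolutely_integrable_on {a..b}" and h: "h absolutely_integrable_on {a..b}"
    and du: "\<And>s t. a \<le> s \<Longrightarrow> s \<le> t \<Longrightarrow> t \<le> b \<Longrightarrow> (g has_integral (u t - u s)) {s..t}"
    and dv: "\<And>s t. a \<le> s \<Longrightarrow> s \<le> t \<Longrightarrow> t \<le> b \<Longrightarrow> (h has_integral (v t - v s)) {s..t}"
    and "0 < e"
  obtains d where "0 < d"
    "\<And>s t. a \<le> s \<Longrightarrow> s \<le> t \<Longrightarrow> t \<le> b \<Longrightarrow> t - s < d \<Longrightarrow>
       \<bar>u t * v t - u s * v s - integral {s..t} (\<lambda>r. v r * g r + u r * h r)\<bar>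
         \<le> e * integral {s..t} (\<lambda>r. \<bar>g r\<bar> + \<bar>h r\<bar>)"
proof -
  obtain d1 where "0 < d1"
    and d1: "\<And>r s. r \<in> {a..b} \<Longrightarrow> s \<in> {a..b} \<Longrightarrow> \<bar>r - s\<bar> < d1 \<Longrightarrow> \<bar>u r - u s\<bar> < e"
    using compact_uniformly_continuous[OF cu compact_Icc] \<open>0 < e\<close>
    unfolding uniformly_continuous_on_def dist_real_def by metis
  obtain d2 where "0 < d2"
    and d2: "\<And>r s. r \<in> {a..b} \<Longrightarrow> s \<in> {a..b} \<Longrightarrow> \<bar>r - s\<bar> < d2 \<Longrightarrow> \<bar>v r - v s\<bar> < e"
    using compact_uniformly_continuous[OF cv compact_Icc] \<open>0 < e\<close>
    unfolding uniformly_continuous_on_def dist_real_def by metis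
  show thesis
  proof (rule that[of "min d1 d2"])
    show "0 < min d1 d2" using \<open>0 < d1\<close> \<open>0 < d2\<close> by simp
    fix s t assume st: "a \<le> s" "s \<le> t" "t \<le> b" "t - s < min d1 d2"
    then have sub: "{s..t} \<subseteq> {a..b}" by auto
    show "\<bar>u t * v t - u s * v s - integral {s..t} (\<lambda>r. v r * g r + u r * h r)\<bar>
        \<le> e * integral {s..t} (\<lambda>r. \<bar>g r\<bar> + \<bar>h r\<bar>)"
    proof (rule product_increment_le)
      show "(\<lambda>r. v r * g r) integrable_on {s..t}" "(\<lambda>r. u r * h r) integrable_on {s..t}"
        using absolutely_integrable_continuous_mult[OF _ absolutely_integrable_on_subinterval[OF _ sub]]
          continuous_on_subset[OF _ sub] cu cv g h
        by (auto simp: absolutely_integrable_on_def)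
      show "(\<lambda>r. \<bar>g r\<bar> + \<bar>h r\<bar>) integrable_on {s..t}"
        using g h by (intro integrable_add integrable_on_subinterval[OF _ sub])
          (auto simp: absolutely_integrable_on_def)
      fix r assume "r \<in> {s..t}"
      with st d1[of s r] d2[of t r] show "\<bar>v t - v r\<bar> \<le> e \<and> \<bar>u s - u r\<bar> \<le> e"
        by auto
    qed (use du dv st in auto)
  qed
qed

text \<open>Proved without differentiation almost everywhere: the defect \<open>\<Phi>\<close> below varies on short
  intervals by at most \<open>e\<close> times the variation of \<open>H\<close>, and Bolzano's lemma propagates this
  to \<open>[a, b]\<close>.\<close>

lemma has_integral_product_rule:
  fixes u v g h :: "real \<Rightarrow> real"
  assumes "a \<le> b" and cu: "continuous_on {a..b} u" and cv: "continuous_on {a..b} v"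
    and g: "g absolutely_integrable_on {a..b}" and h: "h absolutely_integrable_on {a..b}"
    and du: "\<And>s t. a \<le> s \<Longrightarrow> s \<le> t \<Longrightarrow> t \<le> b \<Longrightarrow> (g has_integral (u t - u s)) {s..t}"
    and dv: "\<And>s t. a \<le> s \<Longrightarrow> s \<le> t \<Longrightarrow> t \<le> b \<Longrightarrow> (h has_integral (v t - v s)) {s..t}"
  shows "((\<lambda>t. v t * g t + u t * h t) has_integral (u b * v b - u a * v a)) {a..b}"
proof -
  let ?F = "\<lambda>t. v t * g t + u t * h t"
  let ?G = "\<lambda>t. \<bar>g t\<bar> + \<bar>h t\<bar>"
  have F: "?F integrable_on {a..b}"
    using absolutely_integrable_continuous_mult cu cv g h
    by (intro integrable_add) (auto simp: absolutely_integrable_on_def)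
  have G: "?G integrable_on {a..b}"
    using g h by (intro integrable_add) (auto simp: absolutely_integrable_on_def)
  define \<Phi> where "\<Phi> t = u t * v t - integral {a..t} ?F" for t
  define H where "H t = integral {a..t} ?G" for t
  have integral_increment: "integral {a..t} f - integral {a..s} f = integral {s..t} f"
    if "f integrable_on {a..b}" "a \<le> s" "s \<le> t" "t \<le> b" for f :: "real \<Rightarrow> real" and s t
    using Henstock_Kurzweil_Integration.integral_combine[where a=a and c=s and b=t and f=f]
      integrable_on_subinterval[OF that(1), of a t] that(2-4)
    by simp
  have bound: "\<bar>\<Phi> b - \<Phi> a\<bar> \<le> e * (H b - H a)" if "0 < e" for e
  proof -
    obtain d where "0 < d" and d: "\<And>s t. a \<le> s \<Longrightarrow> s \<le> t \<Longrightarrow> t \<le> b \<Longrightarrow> t - s < d \<Longrightarrow>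
        \<bar>u t * v t - u s * v s - integral {s..t} ?F\<bar> \<le> e * integral {s..t} ?G"
      using product_increment_le_of_short[OF cu cv g h du dv \<open>0 < e\<close>] by blast
    have "a \<le> a \<longrightarrow> b \<le> b \<longrightarrow> \<bar>\<Phi> b - \<Phi> a\<bar> \<le> e * (H b - H a)"
      using \<open>a \<le> b\<close>
    proof (induction rule: Bolzano[where
          P = "\<lambda>s t. a \<le> s \<longrightarrow> t \<le> b \<longrightarrow> \<bar>\<Phi> t - \<Phi> s\<bar> \<le> e * (H t - H s)"])
      case (trans r s t)
      then show ?case
        using abs_triangle_ineq[of "\<Phi> t - \<Phi> s" "\<Phi> s - \<Phi> r"] by (auto simp: algebra_simps)
    next
      case (local x)
      show ?case
      proof (intro exI[of _ d] conjI allI impI \<open>0 < d\<close>)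
        fix s t assume "s \<le> x \<and> x \<le> t \<and> t - s < d" "a \<le> s" "t \<le> b"
        then show "\<bar>\<Phi> t - \<Phi> s\<bar> \<le> e * (H t - H s)"
          using d[of s t] integral_increment[OF F, of s t] integral_increment[OF G, of s t]
          by (simp add: \<Phi>_def H_def algebra_simps)
      qed
    qed
    then show ?thesis by simp
  qed
  have "\<bar>\<Phi> b - \<Phi> a\<bar> \<le> 0"
  proof (rule field_le_epsilon)
    fix e :: real assume "0 < e"
    have "H a \<le> H b"
      using integral_nonneg[OF integrable_on_subinterval[OF G]] integral_increment[OF G, of a b] \<open>a \<le> b\<close>
      by (simp add: H_def)
    then have "e / (H b - H a + 1) * (H b - H a) \<le> e"
      using \<open>0 < e\<close> by (simp add: field_simps)
    then show "\<bar>\<Phi> b - \<Phi> a\<bar> \<le> 0 + e"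
      using bound[of "e / (H b - H a + 1)"] \<open>0 < e\<close> \<open>H a \<le> H b\<close> by simp
  qed
  then have "integral {a..b} ?F = u b * v b - u a * v a"
    by (simp add: \<Phi>_def)
  then show ?thesis
    using F by (metis has_integral_integral)
qed

lemma has_integral_product_rule_subinterval:
  fixes u v g h :: "real \<Rightarrow> real"
  assumes "a \<le> s" "s \<le> t" "t \<le> b"
    and "continuous_on {a..b} u" "continuous_on {a..b} v"
    and "g absolutely_integrable_on {a..b}" "h absolutely_integrable_on {a..b}"
    and "\<And>s t. a \<le> s \<Longrightarrow> s \<le> t \<Longrightarrow> t \<le> b \<Longrightarrow> (g has_integral (u t - u s)) {s..t}"
    and "\<And>s t. a \<le> s \<Longrightarrow> s \<le> t \<Longrightarrow> t \<le> b \<Longrightarrow> (h has_integral (v t - v s)) {s..t}"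
  shows "((\<lambda>r. v r * g r + u r * h r) has_integral (u t * v t - u s * v s)) {s..t}"
proof -
  have sub: "{s..t} \<subseteq> {a..b}" using assms(1,3) by auto
  show ?thesis
    using assms(1-3,8,9)
    by (intro has_integral_product_rule continuous_on_subset[OF _ sub]
        absolutely_integrable_on_subinterval[OF _ sub] assms(4-7)) auto
qed

lemma second_mean_value_theorem_increments:
  fixes f F \<rho> :: "real \<Rightarrow> real"
  assumes "a \<le> b" and \<rho>: "mono_on {a..b} \<rho> \<or> antimono_on {a..b} \<rho>"
    and F: "\<And>s t. a \<le> s \<Longrightarrow> s \<le> t \<Longrightarrow> t \<le> b \<Longrightarrow> (f has_integral (F t - F s)) {s..t}"
  obtains c where "c \<in> {a..b}"
    "((\<lambda>t. \<rho> t * f t) has_integral (\<rho> b * F b - \<rho> a * F a - F c * (\<rho> b - \<rho> a))) {a..b}"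
proof -
  have f: "f integrable_on {a..b}" using F[of a b] \<open>a \<le> b\<close> by blast
  have mono_case: "\<exists>c\<in>{a..b}.
      ((\<lambda>t. \<sigma> t * f t) has_integral (\<sigma> a * (F c - F a) + \<sigma> b * (F b - F c))) {a..b}"
    if \<sigma>: "mono_on {a..b} \<sigma>" for \<sigma>
  proof -
    obtain c where c: "c \<in> {a..b}"
      and "((\<lambda>t. \<sigma> t * f t) has_integral (\<sigma> a * integral {a..c} f + \<sigma> b * integral {c..b} f)) {a..b}"
      by (rule second_mean_value_theorem_full[OF f \<open>a \<le> b\<close>, of \<sigma>])
        (use \<sigma> in \<open>auto simp: monotone_on_def\<close>)
    moreover have "integral {a..c} f = F c - F a" "integral {c..b} f = F b - F c"
      using F[of a c] F[of c b] c by (auto intro: integral_unique)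
    ultimately show ?thesis by auto
  qed
  from \<rho> obtain c where c: "c \<in> {a..b}"
    and "((\<lambda>t. \<rho> t * f t) has_integral (\<rho> a * (F c - F a) + \<rho> b * (F b - F c))) {a..b}"
  proof
    assume "antimono_on {a..b} \<rho>"
    then have "mono_on {a..b} (\<lambda>t. - \<rho> t)" by (auto simp: monotone_on_def)
    then obtain c where "c \<in> {a..b}"
      and "((\<lambda>t. - \<rho> t * f t) has_integral (- \<rho> a * (F c - F a) + - \<rho> b * (F b - F c))) {a..b}"
      using mono_case by blast
    with has_integral_neg[OF this(2)] that show thesis by (simp add: add.commute)
  qed (use mono_case that in blast)
  moreover have "\<rho> a * (F c - F a) + \<rho> b * (F b - F c) = \<rho> b * F b - \<rho> a * F a - F c * (\<rho> b - \<rho> a)"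
    by (simp add: algebra_simps)
  ultimately show thesis using that by simp
qed

lemma monotone_on_inverse:
  fixes f :: "real \<Rightarrow> real"
  assumes "mono_on A f \<or> antimono_on A f" "\<And>x. x \<in> A \<Longrightarrow> 0 < f x"
  shows "mono_on A (\<lambda>x. inverse (f x)) \<or> antimono_on A (\<lambda>x. inverse (f x))"
  using assms(1)
proof
  assume "mono_on A f"
  then have "antimono_on A (\<lambda>x. inverse (f x))"
    using assms(2) by (auto simp: monotone_on_def intro: le_imp_inverse_le)
  then show ?thesis ..
next
  assume "antimono_on A f"
  then have "mono_on A (\<lambda>x. inverse (f x))"
    using assms(2) by (auto simp: monotone_on_def intro: le_imp_inverse_le)
  then show ?thesis ..
qed

lemma monotone_on_Icc_bounds:
  fixes f :: "real \<Rightarrow> real"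
  assumes "mono_on {a..b} f \<or> antimono_on {a..b} f" "x \<in> {a..b}"
  shows "(INF t\<in>{a..b}. f t) \<le> f x \<and> f x \<le> max (f a) (f b)"
proof -
  have "a \<le> b" using assms(2) by simp
  then have bounds: "min (f a) (f b) \<le> f t \<and> f t \<le> max (f a) (f b)" if "t \<in> {a..b}" for t
    using assms(1) that unfolding monotone_on_def
    by (metis atLeastAtMost_iff le_max_iff_disj min.coboundedI1 min.coboundedI2 order_refl)
  then have "bdd_below (f ` {a..b})"
    by (meson bdd_belowI2)
  then show ?thesis
    using assms(2) bounds by (auto intro: cINF_lower)
qed

lemma abs_integral_subinterval_le:
  fixes F G :: "real \<Rightarrow> real"
  assumes "F integrable_on {a..b}" "G integrable_on {a..b}"
    and "\<And>x. x \<in> {a..b} \<Longrightarrow> \<bar>F x\<bar> \<le> G x" and "a \<le> s" "t \<le> b"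
  shows "\<bar>integral {s..t} F\<bar> \<le> integral {a..b} G"
proof -
  have sub: "{s..t} \<subseteq> {a..b}" using assms(4,5) by auto
  have "\<bar>integral {s..t} F\<bar> \<le> integral {s..t} G"
    using sub assms(3)
    by (intro integral_norm_bound_integral[where 'a=real, simplified]
        integrable_on_subinterval[OF assms(1) sub] integrable_on_subinterval[OF assms(2) sub]) auto
  also have "\<dots> \<le> integral {a..b} G"
    using assms(3)
    by (intro integral_subset_le sub integrable_on_subinterval[OF assms(2) sub] assms(2))
      (meson abs_ge_zero order_trans)
  finally show ?thesis .
qed

lemma abs_double_product_le:
  fixes a b e :: real
  assumes "0 < e"
  shows "\<bar>2 * (a * b)\<bar> \<le> a\<^sup>2 / e + e * b\<^sup>2"
proof -
  have "0 \<le> (\<bar>a\<bar> - e * \<bar>b\<bar>)\<^sup>2" by simp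
  then have "2 * e * \<bar>a * b\<bar> \<le> a\<^sup>2 + e\<^sup>2 * b\<^sup>2"
    by (simp add: power2_diff power_mult_distrib abs_mult mult_ac)
  then show ?thesis using assms by (simp add: field_simps abs_mult power2_eq_square)
qed

lemma abs_double_product_le_of_sq_le:
  fixes a b A B \<mu> :: real
  assumes "0 < \<mu>" "a\<^sup>2 \<le> A" "b\<^sup>2 \<le> B"
  shows "\<bar>2 * (a * b)\<bar> \<le> (A + \<mu>\<^sup>2 * B) / \<mu>"
proof -
  have "\<bar>2 * (a * b)\<bar> \<le> a\<^sup>2 / \<mu> + \<mu> * b\<^sup>2"
    using assms(1) by (rule abs_double_product_le)
  also have "\<dots> \<le> A / \<mu> + \<mu> * B"
    using assms by (intro add_mono divide_right_mono mult_left_mono) auto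
  also have "\<dots> = (A + \<mu>\<^sup>2 * B) / \<mu>"
    using assms(1) by (simp add: field_simps power2_eq_square)
  finally show ?thesis .
qed

text \<open>For \<open>sin a = 0\<close> the condition forces \<open>y0 = 0\<close>, and \<open>cot a = cos a / 0 = 0\<close>.\<close>

lemma boundary_condition_abs_mult_le:
  fixes y0 y1 a :: real
  assumes "y0 * cos a + y1 * sin a = 0"
  shows "\<bar>y0 * y1\<bar> \<le> \<bar>cot a\<bar> * y0\<^sup>2"
proof (cases "sin a = 0")
  case True
  then have "y0 = 0" using assms sin_cos_squared_add[of a] by auto
  then show ?thesis by simp
next
  case False
  then have "y1 = - y0 * cot a" using assms by (simp add: cot_def field_simps)
  then have "\<bar>y0 * y1\<bar> = \<bar>cot a\<bar> * \<bar>y0\<bar>\<^sup>2" by (simp add: abs_mult power2_eq_square)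
  then show ?thesis by simp
qed

lemma abs_le_one_plus_power2: "\<bar>t :: real\<bar> \<le> 1 + t\<^sup>2"
  using zero_le_power2[of "\<bar>t\<bar> - 1"] zero_le_power2[of t] by (simp add: power2_diff)

section \<open>Weak solutions of the Sturm-Liouville equation\<close>

locale SL_solution =
  fixes w q y y' :: "real \<Rightarrow> real" and lam :: real
  assumes w_integrable: "w absolutely_integrable_on {0..1}"
    and q_integrable: "q absolutely_integrable_on {0..1}"
    and y_has_derivative: "\<And>x. x \<in> {0..1} \<Longrightarrow> (y has_real_derivative y' x) (at x within {0..1})"
    and y'_has_integral: "\<And>x. x \<in> {0..1} \<Longrightarrow> ((\<lambda>t. (q t - lam * w t) * y t) has_integral (y' x - y' 0)) {0..x}"
begin

definition y'' :: "real \<Rightarrow> real" where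
  "y'' t = (q t - lam * w t) * y t"

lemma continuous_on_y: "continuous_on {0..1} y"
  using y_has_derivative by (rule DERIV_continuous_on)

lemma y''_integrable: "y'' absolutely_integrable_on {0..1}"
proof -
  have "(\<lambda>t. q t - lam * w t) absolutely_integrable_on {0..1}"
    using q_integrable set_integrable_mult_right[OF w_integrable] by (rule set_integral_diff(1))
  from absolutely_integrable_continuous_mult[OF continuous_on_y this] show ?thesis
    by (simp only: y''_def[abs_def] mult.commute)
qed

lemma y'_increment:
  assumes "0 \<le> s" "s \<le> t" "t \<le> 1"
  shows "(y'' has_integral (y' t - y' s)) {s..t}"
proof -
  have y'': "y'' integrable_on {0..1}"
    using y''_integrable by (simp add: absolutely_integrable_on_def)
  have y'_eq: "integral {0..x} y'' = y' x - y' 0" if "x \<in> {0..1}" for x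
    using y'_has_integral[OF that] by (simp add: y''_def[abs_def] integral_unique)
  have "integral {0..s} y'' + integral {s..t} y'' = integral {0..t} y''"
    using assms integrable_on_subinterval[OF y'', of 0 t]
    by (intro Henstock_Kurzweil_Integration.integral_combine) auto
  then have "integral {s..t} y'' = y' t - y' s"
    using assms y'_eq[of s] y'_eq[of t] by simp
  moreover have "y'' integrable_on {s..t}"
    using assms by (intro integrable_on_subinterval[OF y'']) auto
  ultimately show ?thesis
    by (metis has_integral_integral)
qed

lemma continuous_on_y': "continuous_on {0..1} y'"
proof -
  have "continuous_on {0..1} (\<lambda>x. y' 0 + integral {0..x} y'')"
    using y''_integrable
    by (intro continuous_intros indefinite_integral_continuous_1) (simp add: absolutely_integrable_on_def)
  moreover have "y' 0 + integral {0..x} y'' = y' x" if "x \<in> {0..1}" for x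
    using y'_increment[of 0 x] that by (simp add: integral_unique)
  ultimately show ?thesis by (rule continuous_on_eq)
qed

lemma y_increment:
  assumes "0 \<le> s" "s \<le> t" "t \<le> 1"
  shows "(y' has_integral (y t - y s)) {s..t}"
proof (rule fundamental_theorem_of_calculus[OF \<open>s \<le> t\<close>])
  fix x assume "x \<in> {s..t}"
  then have "(y has_real_derivative y' x) (at x within {s..t})"
    using assms by (intro has_field_derivative_subset[OF y_has_derivative]) auto
  then show "(y has_vector_derivative y' x) (at x within {s..t})"
    by (simp add: has_real_derivative_iff_has_vector_derivative)
qed

lemma y'_integrable: "y' absolutely_integrable_on {0..1}"
  using continuous_on_y' by (rule absolutely_integrable_continuous_real)

lemma has_integral_y_sq_increment:
  assumes "0 \<le> s" "s \<le> t" "t \<le> 1"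
  shows "((\<lambda>r. 2 * (y r * y' r)) has_integral ((y t)\<^sup>2 - (y s)\<^sup>2)) {s..t}"
  using has_integral_product_rule_subinterval[OF assms continuous_on_y continuous_on_y y'_integrable
      y'_integrable y_increment y_increment]
  by (simp add: power2_eq_square)

lemma has_integral_y'_sq_increment:
  assumes "0 \<le> s" "s \<le> t" "t \<le> 1"
  shows "((\<lambda>r. 2 * (y' r * y'' r)) has_integral ((y' t)\<^sup>2 - (y' s)\<^sup>2)) {s..t}"
  using has_integral_product_rule_subinterval[OF assms continuous_on_y' continuous_on_y' y''_integrable
      y''_integrable y'_increment y'_increment]
  by (simp add: power2_eq_square)

lemma has_integral_y_y'':
  "((\<lambda>r. (y' r)\<^sup>2 + y r * y'' r) has_integral (y 1 * y' 1 - y 0 * y' 0)) {0..1}"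
  using has_integral_product_rule[OF _ continuous_on_y continuous_on_y' y'_integrable y''_integrable
      y_increment y'_increment]
  by (simp add: power2_eq_square)

lemma y_sq_q_integrable: "(\<lambda>t. (y t)\<^sup>2 * q t) integrable_on {0..1}"
  using absolutely_integrable_continuous_mult[OF continuous_on_power[OF continuous_on_y] q_integrable]
  by (simp add: absolutely_integrable_on_def)

lemma y_sq_variation_le:
  assumes "0 < e" "a \<in> {0..1}" "b \<in> {0..1}"
  shows "\<bar>(y b)\<^sup>2 - (y a)\<^sup>2\<bar>
           \<le> integral {0..1} (\<lambda>t. (y' t)\<^sup>2) / e + e * integral {0..1} (\<lambda>t. (y t)\<^sup>2)"
proof -
  define G where "G t = (y' t)\<^sup>2 / e + e * (y t)\<^sup>2" for t
  have "(G has_integral integral {0..1} (\<lambda>t. (y' t)\<^sup>2) / e + e * integral {0..1} (\<lambda>t. (y t)\<^sup>2)) {0..1}"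
    unfolding G_def[abs_def]
    by (intro has_integral_add has_integral_mult_right has_integral_divide integrable_integral
        integrable_continuous_real continuous_intros continuous_on_y continuous_on_y')
  note G = integral_unique[OF this, symmetric] has_integral_integrable[OF this]
  have "\<bar>(y v)\<^sup>2 - (y u)\<^sup>2\<bar> \<le> integral {0..1} G" if "0 \<le> u" "u \<le> v" "v \<le> 1" for u v
  proof -
    have "\<bar>(y v)\<^sup>2 - (y u)\<^sup>2\<bar> = \<bar>integral {u..v} (\<lambda>r. 2 * (y r * y' r))\<bar>"
      using integral_unique[OF has_integral_y_sq_increment[OF that]] by simp
    also have "\<dots> \<le> integral {0..1} G"
    proof (rule abs_integral_subinterval_le)
      show "(\<lambda>r. 2 * (y r * y' r)) integrable_on {0..1}"
        by (intro integrable_continuous_real continuous_intros continuous_on_y continuous_on_y')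
      show "\<bar>2 * (y r * y' r)\<bar> \<le> G r" for r
        using abs_double_product_le[OF \<open>0 < e\<close>, of "y' r" "y r"] by (simp add: G_def mult.commute)
    qed (use G that in auto)
    finally show ?thesis .
  qed
  then show ?thesis
    unfolding G using assms(2,3) by (metis abs_minus_commute atLeastAtMost_iff le_cases)
qed

end

section \<open>Normalised solutions and their energy\<close>

locale SL_normalized_solution = SL_solution +
  fixes m W C :: real
  assumes m_pos: "0 < m"
    and w_bounds: "\<And>x. x \<in> {0..1} \<Longrightarrow> m \<le> w x \<and> w x \<le> W"
    and w_monotone: "mono_on {0..1} w \<or> antimono_on {0..1} w"
    and q_L1_le: "integral {0..1} (\<lambda>x. \<bar>q x\<bar>) \<le> C"
    and normalized: "integral {0..1} (\<lambda>x. w x * (y x)\<^sup>2) = 1"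
begin

lemma w_pos: "x \<in> {0..1} \<Longrightarrow> 0 < w x"
  using w_bounds[of x] m_pos by linarith

lemma m_le_W: "m \<le> W"
  using w_bounds[of 0] by auto

lemma abs_q_integrable: "(\<lambda>x. \<bar>q x\<bar>) integrable_on {0..1}"
  using q_integrable by (simp add: absolutely_integrable_on_def)

lemma C_nonneg: "0 \<le> C"
  using integral_nonneg[OF abs_q_integrable] q_L1_le by fastforce

lemma abs_integral_le_L1_bound:
  assumes "0 \<le> s" "t \<le> 1" "F integrable_on {s..t}" "0 \<le> B"
    and "\<And>r. r \<in> {s..t} \<Longrightarrow> \<bar>F r\<bar> \<le> B * \<bar>q r\<bar>"
  shows "\<bar>integral {s..t} F\<bar> \<le> B * C"
proof -
  have sub: "{s..t} \<subseteq> {0..1}" using assms(1,2) by auto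
  have q: "(\<lambda>x. \<bar>q x\<bar>) integrable_on {s..t}"
    using integrable_on_subinterval[OF abs_q_integrable sub] .
  have "\<bar>integral {s..t} F\<bar> \<le> integral {s..t} (\<lambda>r. B * \<bar>q r\<bar>)"
    using integral_norm_bound_integral[OF assms(3) integrable_on_mult_right[OF q]] assms(5) by auto
  also have "\<dots> = B * integral {s..t} (\<lambda>r. \<bar>q r\<bar>)"
    by simp
  also have "\<dots> \<le> B * C"
    using integral_subset_le[OF sub q abs_q_integrable] q_L1_le assms(4)
    by (intro mult_left_mono) auto
  finally show ?thesis .
qed

lemma has_integral_w_y_sq: "((\<lambda>x. w x * (y x)\<^sup>2) has_integral 1) {0..1}"
proof -
  have "(\<lambda>x. (y x)\<^sup>2 * w x) integrable_on {0..1}"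
    using absolutely_integrable_continuous_mult[OF continuous_on_power[OF continuous_on_y] w_integrable]
    by (simp add: absolutely_integrable_on_def)
  then show ?thesis
    using normalized by (metis (no_types, lifting) has_integral_integral mult.commute ext)
qed

lemma integral_y_sq_le: "integral {0..1} (\<lambda>t. (y t)\<^sup>2) \<le> 1 / m"
proof -
  have my: "((\<lambda>t. m * (y t)\<^sup>2) has_integral m * integral {0..1} (\<lambda>t. (y t)\<^sup>2)) {0..1}"
    by (intro has_integral_mult_right integrable_integral integrable_continuous_real
        continuous_intros continuous_on_y)
  have "m * integral {0..1} (\<lambda>t. (y t)\<^sup>2) \<le> 1"
    by (rule has_integral_le[OF my has_integral_w_y_sq]) (use w_bounds in \<open>auto intro: mult_right_mono\<close>)
  then show ?thesis
    using m_pos by (simp add: field_simps)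
qed

lemma ex_y_sq_le: "\<exists>s\<in>{0..1}. (y s)\<^sup>2 \<le> 1 / m"
proof -
  obtain s where s: "s \<in> {0..1}" and min: "\<And>t. t \<in> {0..1} \<Longrightarrow> (y s)\<^sup>2 \<le> (y t)\<^sup>2"
    using continuous_attains_inf[OF compact_Icc _ continuous_on_power[OF continuous_on_y]] by force
  have "(y s)\<^sup>2 \<le> integral {0..1} (\<lambda>t. (y t)\<^sup>2)"
    using integral_le[OF integrable_const_ivl
        integrable_continuous_real[OF continuous_on_power[OF continuous_on_y]] min]
    by simp
  with s integral_y_sq_le show ?thesis by force
qed

lemma integral_y'_sq_eq:
  "integral {0..1} (\<lambda>t. (y' t)\<^sup>2) = y 1 * y' 1 - y 0 * y' 0 - integral {0..1} (\<lambda>t. (y t)\<^sup>2 * q t) + lam"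
proof -
  have "((\<lambda>t. ((y' t)\<^sup>2 + y t * y'' t) - ((y t)\<^sup>2 * q t - lam * (w t * (y t)\<^sup>2))) has_integral
      (y 1 * y' 1 - y 0 * y' 0) - (integral {0..1} (\<lambda>t. (y t)\<^sup>2 * q t) - lam * 1)) {0..1}"
    using has_integral_y_y'' y_sq_q_integrable has_integral_w_y_sq
    by (intro has_integral_diff has_integral_mult_right) auto
  moreover have "((y' t)\<^sup>2 + y t * y'' t) - ((y t)\<^sup>2 * q t - lam * (w t * (y t)\<^sup>2)) = (y' t)\<^sup>2" for t
    by (simp add: y''_def power2_eq_square algebra_simps)
  ultimately show ?thesis
    by (simp add: integral_unique)
qed

lemma w_monotone_on:
  assumes "0 \<le> a" "b \<le> 1"
  shows "mono_on {a..b} w \<or> antimono_on {a..b} w"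
  using w_monotone monotone_on_subset[of "{0..1}" _ _ w "{a..b}"] assms by auto

definition energy :: "real \<Rightarrow> real" where
  "energy x = (y' x)\<^sup>2 + lam * w x * (y x)\<^sup>2"

lemma energy_nonneg: "0 \<le> lam \<Longrightarrow> x \<in> {0..1} \<Longrightarrow> 0 \<le> energy x"
  unfolding energy_def using w_pos[of x] by simp

lemma energy_increment:
  assumes "0 \<le> a" "a \<le> b" "b \<le> 1"
  obtains c where
    "energy b - energy a = integral {a..b} (\<lambda>r. 2 * (y' r * y r) * q r) + lam * (y c)\<^sup>2 * (w b - w a)"
proof -
  obtain c where "((\<lambda>t. w t * (2 * (y t * y' t))) has_integral
      (w b * (y b)\<^sup>2 - w a * (y a)\<^sup>2 - (y c)\<^sup>2 * (w b - w a))) {a..b}"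
  proof (rule second_mean_value_theorem_increments[OF \<open>a \<le> b\<close> w_monotone_on[OF assms(1,3)]])
    show "((\<lambda>r. 2 * (y r * y' r)) has_integral ((y t)\<^sup>2 - (y s)\<^sup>2)) {s..t}"
      if "a \<le> s" "s \<le> t" "t \<le> b" for s t
      using has_integral_y_sq_increment that assms by auto
  qed
  from has_integral_add[OF has_integral_y'_sq_increment[OF assms] has_integral_mult_right[OF this, of lam]]
  have "((\<lambda>r. 2 * (y' r * y r) * q r) has_integral
      (y' b)\<^sup>2 - (y' a)\<^sup>2 + lam * (w b * (y b)\<^sup>2 - w a * (y a)\<^sup>2 - (y c)\<^sup>2 * (w b - w a))) {a..b}"
    by (simp add: y''_def algebra_simps)
  then show thesis
    by (intro that[of c]) (simp add: integral_unique energy_def algebra_simps)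
qed

lemma energy_over_weight_increment:
  assumes "0 \<le> a" "a \<le> b" "b \<le> 1"
  obtains c where "(\<lambda>r. 2 * (y' r * y r) * q r / w r) integrable_on {a..b}"
    "energy b / w b - energy a / w a
       = integral {a..b} (\<lambda>r. 2 * (y' r * y r) * q r / w r) + (y' c)\<^sup>2 * (1 / w b - 1 / w a)"
proof -
  have w_ne: "w r \<noteq> 0" if "r \<in> {a..b}" for r
    using w_pos[of r] that assms by auto
  have "mono_on {a..b} (\<lambda>t. inverse (w t)) \<or> antimono_on {a..b} (\<lambda>t. inverse (w t))"
    using w_pos assms by (intro monotone_on_inverse w_monotone_on) auto
  then obtain c where "((\<lambda>t. inverse (w t) * (2 * (y' t * y'' t))) has_integral
      (inverse (w b) * (y' b)\<^sup>2 - inverse (w a) * (y' a)\<^sup>2 - (y' c)\<^sup>2 * (inverse (w b) - inverse (w a)))) {a..b}"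
  proof (rule second_mean_value_theorem_increments[OF \<open>a \<le> b\<close>])
    show "((\<lambda>r. 2 * (y' r * y'' r)) has_integral ((y' t)\<^sup>2 - (y' s)\<^sup>2)) {s..t}"
      if "a \<le> s" "s \<le> t" "t \<le> b" for s t
      using has_integral_y'_sq_increment that assms by auto
  qed
  from has_integral_add[OF this has_integral_mult_right[OF has_integral_y_sq_increment[OF assms], of lam]]
  have "((\<lambda>r. 2 * (y' r * y r) * q r / w r) has_integral
      inverse (w b) * (y' b)\<^sup>2 - inverse (w a) * (y' a)\<^sup>2 - (y' c)\<^sup>2 * (inverse (w b) - inverse (w a))
      + lam * ((y b)\<^sup>2 - (y a)\<^sup>2)) {a..b}"
  proof (rule has_integral_eq[rotated])
    fix r assume "r \<in> {a..b}"
    then show "inverse (w r) * (2 * (y' r * y'' r)) + lam * (2 * (y r * y' r)) = 2 * (y' r * y r) * q r / w r"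
      using w_ne[of r] by (simp add: y''_def field_simps)
  qed
  moreover have "energy b / w b - energy a / w a = inverse (w b) * (y' b)\<^sup>2 - inverse (w a) * (y' a)\<^sup>2
      + lam * ((y b)\<^sup>2 - (y a)\<^sup>2)"
    using w_ne[of a] w_ne[of b] assms by (simp add: energy_def field_simps)
  ultimately show thesis
    by (intro that[of c]) (auto simp: integral_unique divide_inverse algebra_simps)
qed

lemma energy_increment_bound:
  assumes "a \<in> {0..1}" "b \<in> {0..1}" "0 \<le> \<rho>" "\<And>r. r \<in> {0..1} \<Longrightarrow> \<bar>2 * (y' r * y r)\<bar> \<le> \<rho>"
  obtains c where "\<bar>energy b - energy a - lam * (y c)\<^sup>2 * (w b - w a)\<bar> \<le> \<rho> * C"
proof -
  have "\<exists>c. \<bar>energy z - energy x - lam * (y c)\<^sup>2 * (w z - w x)\<bar> \<le> \<rho> * C"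
    if xz: "0 \<le> x" "x \<le> z" "z \<le> 1" for x z
  proof -
    obtain c where c: "energy z - energy x
        = integral {x..z} (\<lambda>r. 2 * (y' r * y r) * q r) + lam * (y c)\<^sup>2 * (w z - w x)"
      using energy_increment[OF xz] .
    have "(\<lambda>r. 2 * (y' r * y r) * q r) integrable_on {0..1}"
      using absolutely_integrable_continuous_mult[OF _ q_integrable] continuous_on_y continuous_on_y'
      by (simp add: absolutely_integrable_on_def continuous_intros)
    then have "\<bar>integral {x..z} (\<lambda>r. 2 * (y' r * y r) * q r)\<bar> \<le> \<rho> * C"
      using xz assms(3,4)
      by (intro abs_integral_le_L1_bound integrable_on_subinterval[OF \<open>_ integrable_on {0..1}\<close>])
        (auto simp: abs_mult intro!: mult_right_mono)
    with c show ?thesis by (intro exI[of _ c]) simp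
  qed
  note increment = this
  show thesis
  proof (cases "a \<le> b")
    case False
    then obtain c where "\<bar>energy a - energy b - lam * (y c)\<^sup>2 * (w a - w b)\<bar> \<le> \<rho> * C"
      using increment[of b a] assms(1,2) by auto
    moreover have "energy a - energy b - lam * (y c)\<^sup>2 * (w a - w b)
        = - (energy b - energy a - lam * (y c)\<^sup>2 * (w b - w a))"
      by (simp add: algebra_simps)
    ultimately show thesis
      using that[of c] by simp
  qed (use increment assms that in auto)
qed

lemma energy_over_weight_increment_bound:
  assumes "a \<in> {0..1}" "b \<in> {0..1}" "0 \<le> \<rho>" "\<And>r. r \<in> {0..1} \<Longrightarrow> \<bar>2 * (y' r * y r)\<bar> \<le> \<rho>"
  obtains c where "\<bar>energy b / w b - energy a / w a - (y' c)\<^sup>2 * (1 / w b - 1 / w a)\<bar> \<le> \<rho> / m * C"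
proof -
  have "\<exists>c. \<bar>energy z / w z - energy x / w x - (y' c)\<^sup>2 * (1 / w z - 1 / w x)\<bar> \<le> \<rho> / m * C"
    if xz: "0 \<le> x" "x \<le> z" "z \<le> 1" for x z
  proof -
    obtain c where int: "(\<lambda>r. 2 * (y' r * y r) * q r / w r) integrable_on {x..z}"
      and c: "energy z / w z - energy x / w x
        = integral {x..z} (\<lambda>r. 2 * (y' r * y r) * q r / w r) + (y' c)\<^sup>2 * (1 / w z - 1 / w x)"
      using energy_over_weight_increment[OF xz] .
    have "\<bar>2 * (y' r * y r) * q r / w r\<bar> \<le> \<rho> / m * \<bar>q r\<bar>" if r: "r \<in> {0..1}" for r
    proof -
      have "\<bar>2 * (y' r * y r) * q r / w r\<bar> = \<bar>2 * (y' r * y r)\<bar> / w r * \<bar>q r\<bar>"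
        using w_pos[OF r] by (simp add: abs_mult)
      also have "\<dots> \<le> \<rho> / m * \<bar>q r\<bar>"
        using assms(3) assms(4)[OF r] w_bounds[OF r] m_pos
        by (intro mult_right_mono frac_le) auto
      finally show ?thesis .
    qed
    then have "\<bar>integral {x..z} (\<lambda>r. 2 * (y' r * y r) * q r / w r)\<bar> \<le> \<rho> / m * C"
      using xz assms(3) m_pos by (intro abs_integral_le_L1_bound int) auto
    with c show ?thesis by (intro exI[of _ c]) simp
  qed
  note increment = this
  show thesis
  proof (cases "a \<le> b")
    case False
    then obtain c where "\<bar>energy a / w a - energy b / w b - (y' c)\<^sup>2 * (1 / w a - 1 / w b)\<bar> \<le> \<rho> / m * C"
      using increment[of b a] assms(1,2) by auto
    moreover have "energy a / w a - energy b / w b - (y' c)\<^sup>2 * (1 / w a - 1 / w b)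
        = - (energy b / w b - energy a / w a - (y' c)\<^sup>2 * (1 / w b - 1 / w a))"
      by (simp add: algebra_simps)
    ultimately show thesis
      using that[of c] by simp
  qed (use increment assms that in auto)
qed

lemma energy_le:
  assumes "0 \<le> lam" "a \<in> {0..1}" "b \<in> {0..1}" "0 \<le> \<rho>"
    and "\<And>r. r \<in> {0..1} \<Longrightarrow> \<bar>2 * (y' r * y r)\<bar> \<le> \<rho>"
  shows "energy a \<le> W / m * (energy b + \<rho> * C)"
proof -
  have E: "0 \<le> energy b + \<rho> * C"
    using energy_nonneg[OF assms(1,3)] assms(4) C_nonneg by simp
  have W: "m \<le> w a" "w a \<le> W" "m \<le> w b"
    using w_bounds assms(2,3) by auto
  show ?thesis
  proof (cases "w a \<le> w b")
    case True
    obtain c where "\<bar>energy b - energy a - lam * (y c)\<^sup>2 * (w b - w a)\<bar> \<le> \<rho> * C"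
      using energy_increment_bound[OF assms(2-5)] .
    moreover have "0 \<le> lam * (y c)\<^sup>2 * (w b - w a)"
      using True assms(1) by simp
    ultimately have "energy a \<le> 1 * (energy b + \<rho> * C)"
      by simp
    also have "\<dots> \<le> W / m * (energy b + \<rho> * C)"
      using E m_le_W m_pos by (intro mult_right_mono) auto
    finally show ?thesis .
  next
    case False
    obtain c where "\<bar>energy b / w b - energy a / w a - (y' c)\<^sup>2 * (1 / w b - 1 / w a)\<bar> \<le> \<rho> / m * C"
      using energy_over_weight_increment_bound[OF assms(2-5)] .
    moreover have "0 \<le> (y' c)\<^sup>2 * (1 / w b - 1 / w a)"
      using False W m_pos by (simp add: frac_le)
    moreover have "energy b / w b \<le> energy b / m"
      using energy_nonneg[OF assms(1,3)] W m_pos by (intro divide_left_mono) auto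
    ultimately have "energy a / w a \<le> (energy b + \<rho> * C) / m"
      by (simp add: add_divide_distrib)
    then have "energy a \<le> w a * ((energy b + \<rho> * C) / m)"
      using W m_pos by (simp add: pos_divide_le_eq mult.commute)
    also have "\<dots> = w a / m * (energy b + \<rho> * C)"
      by simp
    also have "\<dots> \<le> W / m * (energy b + \<rho> * C)"
      using E W m_pos by (intro mult_right_mono divide_right_mono) auto
    finally show ?thesis .
  qed
qed

lemma has_integral_energy:
  "(energy has_integral (integral {0..1} (\<lambda>t. (y' t)\<^sup>2) + lam)) {0..1}"
proof -
  have "((\<lambda>t. (y' t)\<^sup>2 + lam * (w t * (y t)\<^sup>2)) has_integral (integral {0..1} (\<lambda>t. (y' t)\<^sup>2) + lam * 1)) {0..1}"
    by (intro has_integral_add has_integral_mult_right has_integral_w_y_sq integrable_integral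
        integrable_continuous_real continuous_intros continuous_on_y')
  then show ?thesis
    by (simp add: energy_def[abs_def] mult.assoc)
qed

lemma max_sq_sum_le_energy:
  assumes "0 < lam" "(4 * (W / m) * C)\<^sup>2 \<le> lam * m" "x1 \<in> {0..1}" "x2 \<in> {0..1}"
    and max: "\<And>t. t \<in> {0..1} \<Longrightarrow> (y' t)\<^sup>2 \<le> (y' x1)\<^sup>2 \<and> (y t)\<^sup>2 \<le> (y x2)\<^sup>2"
    and "b \<in> {0..1}"
  shows "(y' x1)\<^sup>2 + lam * m * (y x2)\<^sup>2 \<le> 4 * (W / m) * energy b"
proof -
  define K where "K = W / m"
  define T where "T = (y' x1)\<^sup>2 + lam * m * (y x2)\<^sup>2"
  define \<mu> where "\<mu> = sqrt (lam * m)"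
  have \<mu>: "0 < \<mu>" "\<mu>\<^sup>2 = lam * m"
    using assms(1) m_pos by (auto simp: \<mu>_def)
  have "4 * K * C \<le> \<mu>"
    unfolding \<mu>_def K_def using assms(2) by (rule real_le_rsqrt)
  moreover have "0 \<le> T"
    using assms(1) m_pos by (simp add: T_def)
  ultimately have "4 * K * C * T \<le> \<mu> * T"
    by (rule mult_right_mono)
  then have KC: "2 * K * C * (T / \<mu>) \<le> T / 2"
    using \<mu>(1) by (simp add: field_simps)
  have \<rho>: "\<bar>2 * (y' r * y r)\<bar> \<le> T / \<mu>" if "r \<in> {0..1}" for r
    using abs_double_product_le_of_sq_le[OF \<mu>(1)] max[OF that] by (simp add: T_def \<mu>(2))
  have "0 \<le> T / \<mu>"
    using \<open>0 \<le> T\<close> \<mu>(1) by simp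
  then have E: "energy a \<le> K * (energy b + T / \<mu> * C)" if "a \<in> {0..1}" for a
    using energy_le[OF _ that \<open>b \<in> {0..1}\<close> _ \<rho>] assms(1) by (simp add: K_def)
  have "(y' x1)\<^sup>2 \<le> energy x1"
    using w_pos[OF assms(3)] assms(1) by (simp add: energy_def)
  moreover have "lam * m * (y x2)\<^sup>2 \<le> lam * w x2 * (y x2)\<^sup>2"
    using w_bounds[OF assms(4)] assms(1) by (intro mult_right_mono mult_left_mono) auto
  then have "lam * m * (y x2)\<^sup>2 \<le> energy x2"
    by (simp add: energy_def add_increasing)
  ultimately have "T \<le> energy x1 + energy x2"
    by (simp add: T_def)
  also have "\<dots> \<le> 2 * (K * (energy b + T / \<mu> * C))"
    using add_mono[OF E[OF assms(3)] E[OF assms(4)]] by (simp only: mult_2)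
  also have "\<dots> = 2 * K * energy b + 2 * K * C * (T / \<mu>)"
    by (simp add: algebra_simps)
  finally show ?thesis
    using KC by (simp add: T_def K_def)
qed

lemma max_sq_sum_le_integral:
  assumes "0 < lam" "(4 * (W / m) * C)\<^sup>2 \<le> lam * m" "x1 \<in> {0..1}" "x2 \<in> {0..1}"
    and "\<And>t. t \<in> {0..1} \<Longrightarrow> (y' t)\<^sup>2 \<le> (y' x1)\<^sup>2 \<and> (y t)\<^sup>2 \<le> (y x2)\<^sup>2"
  shows "(y' x1)\<^sup>2 + lam * m * (y x2)\<^sup>2 \<le> 4 * (W / m) * (integral {0..1} (\<lambda>t. (y' t)\<^sup>2) + lam)"
proof -
  define c where "c = 4 * (W / m)"
  have "0 < c"
    using m_pos m_le_W by (simp add: c_def)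
  then have "((y' x1)\<^sup>2 + lam * m * (y x2)\<^sup>2) / c \<le> energy b" if "b \<in> {0..1}" for b
    using max_sq_sum_le_energy[OF assms that, folded c_def] by (simp add: pos_divide_le_eq mult.commute)
  then have "((y' x1)\<^sup>2 + lam * m * (y x2)\<^sup>2) / c * 1 \<le> integral {0..1} (\<lambda>t. (y' t)\<^sup>2) + lam"
    by (intro has_integral_le[OF has_integral_const_real[of _ 0 1, simplified] has_integral_energy]) auto
  then show ?thesis
    using \<open>0 < c\<close> unfolding c_def[symmetric] by (simp add: pos_divide_le_eq mult.commute)
qed

end

text \<open>The second term is the bound of \<open>y_sq_le\<close> at the threshold
  \<open>\<lambda> m = (4 (W/m) C)\<^sup>2 + 8 (W/m) D\<close> beyond which \<open>y_sq_le_of_large_lam\<close> applies.\<close>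

definition sq_bound :: "real \<Rightarrow> real \<Rightarrow> real \<Rightarrow> real \<Rightarrow> real" where
  "sq_bound m W C D =
     max (16 * (W / m) / m) (2 * (1 + 2 * D) / m + ((4 * (W / m) * C)\<^sup>2 + 8 * (W / m) * D) / (m * D))"

locale SL_eigenfunction = SL_normalized_solution +
  fixes k0 k1 :: real
  assumes k0_nonneg: "0 \<le> k0" and k1_nonneg: "0 \<le> k1"
    and boundary_0: "\<bar>y 0 * y' 0\<bar> \<le> k0 * (y 0)\<^sup>2"
    and boundary_1: "\<bar>y 1 * y' 1\<bar> \<le> k1 * (y 1)\<^sup>2"
begin

lemma integral_y'_sq_le:
  assumes Y: "\<And>t. t \<in> {0..1} \<Longrightarrow> (y t)\<^sup>2 \<le> Y"
  shows "integral {0..1} (\<lambda>t. (y' t)\<^sup>2) \<le> lam + (k0 + k1 + C) * Y"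
proof -
  have "k0 * (y 0)\<^sup>2 \<le> k0 * Y" "k1 * (y 1)\<^sup>2 \<le> k1 * Y"
    using Y[of 0] Y[of 1] k0_nonneg k1_nonneg by (auto intro: mult_left_mono)
  then have "y 1 * y' 1 - y 0 * y' 0 \<le> (k0 + k1) * Y"
    using boundary_0 boundary_1 by (simp add: algebra_simps abs_le_iff)
  moreover have "\<bar>integral {0..1} (\<lambda>t. (y t)\<^sup>2 * q t)\<bar> \<le> Y * C"
    using Y order_trans[OF zero_le_power2 Y[of 0]]
    by (intro abs_integral_le_L1_bound y_sq_q_integrable) (auto simp: abs_mult intro: mult_right_mono)
  ultimately show ?thesis
    using integral_y'_sq_eq by (simp add: algebra_simps abs_le_iff)
qed

lemma y_sq_le:
  assumes "k0 + k1 + C \<le> D" "0 < D" "x \<in> {0..1}"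
  shows "(y x)\<^sup>2 \<le> 2 * (1 + 2 * D) / m + lam / D"
proof -
  obtain x2 where "x2 \<in> {0..1}" and max: "\<And>t. t \<in> {0..1} \<Longrightarrow> (y t)\<^sup>2 \<le> (y x2)\<^sup>2"
    using continuous_attains_sup[OF compact_Icc _ continuous_on_power[OF continuous_on_y]] by force
  obtain s where "s \<in> {0..1}" "(y s)\<^sup>2 \<le> 1 / m"
    using ex_y_sq_le by blast
  define Y where "Y = (y x2)\<^sup>2"
  have "(k0 + k1 + C) * Y \<le> D * Y"
    using assms(1) by (intro mult_right_mono) (simp_all add: Y_def)
  then have "integral {0..1} (\<lambda>t. (y' t)\<^sup>2) \<le> lam + D * Y"
    using integral_y'_sq_le[OF max] by (simp add: Y_def)
  then have "integral {0..1} (\<lambda>t. (y' t)\<^sup>2) / (2 * D) + 2 * D * integral {0..1} (\<lambda>t. (y t)\<^sup>2)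
      \<le> (lam + D * Y) / (2 * D) + 2 * D * (1 / m)"
    using integral_y_sq_le \<open>0 < D\<close> by (intro add_mono divide_right_mono mult_left_mono) auto
  then have "Y - 1 / m \<le> (lam + D * Y) / (2 * D) + 2 * D * (1 / m)"
    using y_sq_variation_le[of "2 * D" s x2] \<open>0 < D\<close> \<open>s \<in> {0..1}\<close> \<open>x2 \<in> {0..1}\<close> \<open>(y s)\<^sup>2 \<le> 1 / m\<close>
    by (simp add: Y_def abs_le_iff)
  also have "\<dots> = (lam / D) / 2 + Y / 2 + 2 * (D / m)"
    using \<open>0 < D\<close> by (simp add: field_simps)
  finally have "Y \<le> 2 * (1 / m) + 4 * (D / m) + lam / D"
    by argo
  also have "\<dots> = 2 * (1 + 2 * D) / m + lam / D"
    by (simp add: add_divide_distrib)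
  finally show ?thesis
    using max[OF \<open>x \<in> {0..1}\<close>] by (simp add: Y_def)
qed

lemma y_sq_le_of_large_lam:
  assumes "k0 + k1 + C \<le> D" "0 < D" "(4 * (W / m) * C)\<^sup>2 + 8 * (W / m) * D \<le> lam * m"
    and "x \<in> {0..1}"
  shows "(y x)\<^sup>2 \<le> 16 * (W / m) / m"
proof -
  define K where "K = W / m"
  have "0 < 8 * K * D"
    using m_pos m_le_W \<open>0 < D\<close> by (simp add: K_def)
  then have KD: "8 * K * D \<le> lam * m" and KC: "(4 * K * C)\<^sup>2 \<le> lam * m"
    using assms(3) zero_le_power2[of "4 * K * C"] unfolding K_def[symmetric] by linarith+
  then have "0 < lam * m"
    using \<open>0 < 8 * K * D\<close> by linarith
  then have "0 < lam"
    using m_pos by (simp add: zero_less_mult_iff)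
  obtain x1 where "x1 \<in> {0..1}" and max1: "\<And>t. t \<in> {0..1} \<Longrightarrow> (y' t)\<^sup>2 \<le> (y' x1)\<^sup>2"
    using continuous_attains_sup[OF compact_Icc _ continuous_on_power[OF continuous_on_y']] by force
  obtain x2 where "x2 \<in> {0..1}" and max2: "\<And>t. t \<in> {0..1} \<Longrightarrow> (y t)\<^sup>2 \<le> (y x2)\<^sup>2"
    using continuous_attains_sup[OF compact_Icc _ continuous_on_power[OF continuous_on_y]] by force
  define Y where "Y = (y x2)\<^sup>2"
  have "(k0 + k1 + C) * Y \<le> D * Y"
    using assms(1) by (intro mult_right_mono) (simp_all add: Y_def)
  then have "integral {0..1} (\<lambda>t. (y' t)\<^sup>2) + lam \<le> 2 * lam + D * Y"
    using integral_y'_sq_le[OF max2] by (simp add: Y_def)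
  moreover have "0 < K"
    using m_pos m_le_W by (simp add: K_def)
  moreover have "(y' x1)\<^sup>2 + lam * m * Y \<le> 4 * K * (integral {0..1} (\<lambda>t. (y' t)\<^sup>2) + lam)"
    using max_sq_sum_le_integral[OF \<open>0 < lam\<close> KC[unfolded K_def] \<open>x1 \<in> {0..1}\<close> \<open>x2 \<in> {0..1}\<close>] max1 max2
    by (simp add: Y_def K_def)
  ultimately have "(y' x1)\<^sup>2 + lam * m * Y \<le> 4 * K * (2 * lam + D * Y)"
    by (smt (verit) mult_left_mono)
  also have "\<dots> = 8 * K * lam + 4 * K * D * Y"
    by (simp add: algebra_simps)
  finally have "lam * m * Y \<le> 8 * K * lam + 4 * K * D * Y"
    using zero_le_power2[of "y' x1"] by linarith
  moreover have "8 * K * D * Y \<le> lam * m * Y"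
    using KD by (intro mult_right_mono) (simp_all add: Y_def)
  ultimately have "m * Y * lam \<le> 16 * K * lam"
    by (simp add: algebra_simps)
  then have "Y \<le> 16 * K / m"
    using \<open>0 < lam\<close> m_pos by (simp add: field_simps)
  then show ?thesis
    using max2[OF assms(4)] by (simp add: Y_def K_def)
qed

lemma y_sq_le_sq_bound:
  assumes "k0 + k1 + C \<le> D" "0 < D" "x \<in> {0..1}"
  shows "(y x)\<^sup>2 \<le> sq_bound m W C D"
proof (cases "(4 * (W / m) * C)\<^sup>2 + 8 * (W / m) * D \<le> lam * m")
  case True
  then show ?thesis
    using y_sq_le_of_large_lam[OF assms(1,2) True assms(3)] by (simp add: sq_bound_def)
next
  case False
  then have "lam / D \<le> ((4 * (W / m) * C)\<^sup>2 + 8 * (W / m) * D) / (m * D)"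
    using m_pos assms(2) by (simp add: field_simps)
  then show ?thesis
    using y_sq_le[OF assms] by (simp add: sq_bound_def)
qed

end

lemma SL_eigenpair_sq_le_sq_bound:
  assumes "0 < m" "\<And>x. x \<in> {0..1} \<Longrightarrow> m \<le> w x \<and> w x \<le> W"
    and "mono_on {0..1} w \<or> antimono_on {0..1} w"
    and "w absolutely_integrable_on {0..1}" "q absolutely_integrable_on {0..1}"
    and "integral {0..1} (\<lambda>x. \<bar>q x\<bar>) \<le> C"
    and "SL_eigenpair \<alpha> \<beta> w q lam y" "SL_normalized w y"
    and "\<bar>cot \<alpha>\<bar> + \<bar>cot \<beta>\<bar> + C \<le> D" "0 < D" "x \<in> {0..1}"
  shows "(y x)\<^sup>2 \<le> sq_bound m W C D"
proof -
  obtain y' where "\<forall>x\<in>{0..1}. (y has_real_derivative y' x) (at x within {0..1})"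
    and "\<forall>x\<in>{0..1}. ((\<lambda>t. (q t - lam * w t) * y t) has_integral (y' x - y' 0)) {0..x}"
    and "y 0 * cos \<alpha> + y' 0 * sin \<alpha> = 0" "y 1 * cos \<beta> + y' 1 * sin \<beta> = 0"
    using \<open>SL_eigenpair \<alpha> \<beta> w q lam y\<close> unfolding SL_eigenpair_def by blast
  then interpret SL_eigenfunction w q y y' lam m W C "\<bar>cot \<alpha>\<bar>" "\<bar>cot \<beta>\<bar>"
    using assms boundary_condition_abs_mult_le by unfold_locales (auto simp: SL_normalized_def)
  show ?thesis
    using y_sq_le_sq_bound assms(9-11) .
qed

theorem proposition3p5:
  fixes \<alpha> \<beta> :: real and w :: "real \<Rightarrow> real" and \<Omega> :: "(real \<Rightarrow> real) set"
  assumes "0 \<le> \<alpha>" "\<alpha> < pi" "0 \<le> \<beta>" "\<beta> < pi"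
    and "w absolutely_integrable_on {0..1}"
    and "AE x in lebesgue_on {0..1}. w x > 0"
    and H1: "mono_on {0..1} w \<or> antimono_on {0..1} w"
    and H2: "(INF x\<in>{0..1}. w x) > 0"
    and "\<forall>q\<in>\<Omega>. q absolutely_integrable_on {0..1}"
    and "\<exists>C. \<forall>q\<in>\<Omega>. integral {0..1} (\<lambda>x. \<bar>q x\<bar>) \<le> C"
  shows "\<exists>M>0. \<forall>q\<in>\<Omega>. \<forall>lam y. SL_eigenpair \<alpha> \<beta> w q lam y \<and> SL_normalized w y \<longrightarrow>
            (\<forall>x\<in>{0..1}. \<bar>y x\<bar> \<le> M)"
proof -
  obtain C where C: "\<And>q. q \<in> \<Omega> \<Longrightarrow> integral {0..1} (\<lambda>x. \<bar>q x\<bar>) \<le> \<bar>C\<bar>"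
    using assms(10) by (meson abs_ge_self order_trans)
  define m where "m = (INF x\<in>{0..1}. w x)"
  define W where "W = max (w 0) (w 1)"
  define D where "D = \<bar>cot \<alpha>\<bar> + \<bar>cot \<beta>\<bar> + \<bar>C\<bar> + 1"
  have w_bounds: "m \<le> w x \<and> w x \<le> W" if "x \<in> {0..1}" for x
    using monotone_on_Icc_bounds[OF H1 that] by (simp add: m_def W_def)
  have "0 < m" "0 < D"
    using H2 by (simp_all add: m_def D_def add_nonneg_pos)
  have "0 \<le> sq_bound m W \<bar>C\<bar> D"
    using \<open>0 < m\<close> w_bounds[of 0] by (simp add: sq_bound_def le_max_iff_disj)
  show ?thesis
  proof (intro exI[of _ "1 + sq_bound m W \<bar>C\<bar> D"] conjI ballI allI impI)
    show "0 < 1 + sq_bound m W \<bar>C\<bar> D"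
      using \<open>0 \<le> sq_bound m W \<bar>C\<bar> D\<close> by simp
    fix q y :: "real \<Rightarrow> real" and lam x :: real
    assume "q \<in> \<Omega>" and y: "SL_eigenpair \<alpha> \<beta> w q lam y \<and> SL_normalized w y" and "x \<in> {0..1}"
    have "(y x)\<^sup>2 \<le> sq_bound m W \<bar>C\<bar> D"
      using assms(9) C[OF \<open>q \<in> \<Omega>\<close>] y \<open>q \<in> \<Omega>\<close> \<open>0 < D\<close> \<open>x \<in> {0..1}\<close>
      by (intro SL_eigenpair_sq_le_sq_bound[OF \<open>0 < m\<close> w_bounds H1 assms(5), where q = q])
        (auto simp: D_def)
    then show "\<bar>y x\<bar> \<le> 1 + sq_bound m W \<bar>C\<bar> D"
      using abs_le_one_plus_power2[of "y x"] by linarith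
  qed
qed

end
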